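(* Let $I$ be a non-degenerate interval, $f:I\to\mathbb{R}$ continuous and $y\in I$. (i) If $y$ is not an $\mathsf{M}$-point of $f$, then either $\overline{D}^+f(y)=+\infty$ and $\underline{D}^-f(y)=-\infty$, or $\overline{D}^-f(y)=+\infty$ and $\underline{D}^+f(y)=-\infty$. (ii) If $\underline{D}^-f(y)=-\infty$ and $\underline{D}^+_{ap}f(y)=+\infty$, then $y$ is not an $\mathsf{M}$-point of $f$.
   Context: $\overline{D}^+f(y)=\limsup_{t\to y+}\frac{f(t)-f(y)}{t-y}$, and $\underline{D}^+,\overline{D}^-,\underline{D}^-$ are the other Dini derivatives. The approximate lower right Dini derivative is $\underline{D}^+_{ap}f(y)=\sup\{t:\lim_{\delta\to0+}\delta^{-1}\lambda(\{s\in(y,y+\delta):\frac{f(s)-f(y)}{s-y}\ge t\})=1\}$ ($\lambda$ Lebesgue measure). With $\psi(x)=(x,f(x))$, $y$ is an $\mathsf{M}$-point of $f$ if there are $c\ge1$ and $\varepsilon>0$ with $|\psi(x)-\psi(y)|\le c|\psi(x)-\psi(z)|$ for all $x\in I\cap(y-\varepsilon,y)$, $z\in I\cap(y,y+\varepsilon)$. *)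

theory Defs
  imports "HOL-Analysis.Analysis"
begin

definition dini_upper_right :: "real set \<Rightarrow> (real \<Rightarrow> real) \<Rightarrow> real \<Rightarrow> ereal" where
  "dini_upper_right I f y =
     Limsup (at y within (I \<inter> {y<..})) (\<lambda>t. ereal ((f t - f y) / (t - y)))"

definition dini_lower_right :: "real set \<Rightarrow> (real \<Rightarrow> real) \<Rightarrow> real \<Rightarrow> ereal" where
  "dini_lower_right I f y =
     Liminf (at y within (I \<inter> {y<..})) (\<lambda>t. ereal ((f t - f y) / (t - y)))"

definition dini_upper_left :: "real set \<Rightarrow> (real \<Rightarrow> real) \<Rightarrow> real \<Rightarrow> ereal" where
  "dini_upper_left I f y =
     Limsup (at y within (I \<inter> {..<y})) (\<lambda>t. ereal ((f t - f y) / (t - y)))"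

definition dini_lower_left :: "real set \<Rightarrow> (real \<Rightarrow> real) \<Rightarrow> real \<Rightarrow> ereal" where
  "dini_lower_left I f y =
     Liminf (at y within (I \<inter> {..<y})) (\<lambda>t. ereal ((f t - f y) / (t - y)))"

definition ap_dini_lower_right :: "real set \<Rightarrow> (real \<Rightarrow> real) \<Rightarrow> real \<Rightarrow> ereal" where
  "ap_dini_lower_right I f y =
     Sup (ereal ` {t. ((\<lambda>\<delta>. measure lebesgue
              {s \<in> I \<inter> {y<..<y+\<delta>}. (f s - f y) / (s - y) \<ge> t} / \<delta>)
            \<longlongrightarrow> 1) (at_right 0)})"

text \<open>M-point, with \<psi>(x) = (x, f x) in the Euclidean plane (the product metric on
  real \<times> real is the Euclidean one).\<close>

definition M_point :: "real set \<Rightarrow> (real \<Rightarrow> real) \<Rightarrow> real \<Rightarrow> bool" where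
  "M_point I f y \<longleftrightarrow>
     (\<exists>c\<ge>1. \<exists>\<epsilon>>0. \<forall>x \<in> I \<inter> {y-\<epsilon><..<y}. \<forall>z \<in> I \<inter> {y<..<y+\<epsilon>}.
        dist (x, f x) (y, f y) \<le> c * dist (x, f x) (z, f z))"

end

theory Submission
  imports Defs
begin

text \<open>
  (i) If y is not an M-point, then for every c and \<epsilon> there are x < y < z within \<epsilon> of y with
  |\<psi> x - \<psi> y| > c |\<psi> x - \<psi> z|. For c \<ge> 2 this makes |f x - f y| dominate both (c - 1)(y - x)
  and (c - 2)(z - y) + |f z - f x|, so the difference quotients at x and at z have size at least
  c - 2 and opposite signs, the sign being that of f x - f y. Violations for large c and small \<epsilon>
  are violations for all smaller c and larger \<epsilon>, so one sign of f x - f y occurs at all scales;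
  replacing f by -f exchanges the two signs.

  (ii) Suppose y were an M-point with constant c. Pick x < y with a = f x - f y > (2c + 1)(y - x)
  and a small. Since the right quotients are eventually \<ge> T = 4c + 1 on a set of density one,
  there is s in the right half of (y, y + 2a/T) with f s - f y \<ge> a, hence by the intermediate
  value theorem some z \<in> (y, s] with f z = f x. Then
  a \<le> |\<psi> x - \<psi> y| \<le> c |\<psi> x - \<psi> z| = c (z - x) < c (2a/T) + c (y - x) < a.
\<close>

lemma Liminf_eq_MInfty_iff:
  fixes g :: "'a \<Rightarrow> ereal"
  shows "Liminf F g = -\<infinity> \<longleftrightarrow> (\<forall>B. \<exists>\<^sub>F x in F. g x < ereal B)"
proof (intro iffI allI)
  fix B assume "Liminf F g = -\<infinity>"
  then show "\<exists>\<^sub>F x in F. g x < ereal B"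
    using Liminf_bounded[of "ereal B" g F] by (force simp: frequently_def not_less)
next
  assume freq: "\<forall>B. \<exists>\<^sub>F x in F. g x < ereal B"
  show "Liminf F g = -\<infinity>"
  proof (rule ccontr)
    assume "Liminf F g \<noteq> -\<infinity>"
    then obtain B where "ereal B < Liminf F g"
      using ereal_dense2[of "-\<infinity>" "Liminf F g"] by force
    then have "\<forall>\<^sub>F x in F. ereal B < g x" by (rule less_LiminfD)
    with freq show False
      unfolding frequently_def by (metis (mono_tags, lifting) eventually_mono order.asym)
  qed
qed

lemma Limsup_eq_PInfty_iff:
  fixes g :: "'a \<Rightarrow> ereal"
  shows "Limsup F g = \<infinity> \<longleftrightarrow> (\<forall>B. \<exists>\<^sub>F x in F. ereal B < g x)"
proof (intro iffI allI)
  fix B assume "Limsup F g = \<infinity>"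
  then show "\<exists>\<^sub>F x in F. ereal B < g x"
    using Limsup_bounded[of g "ereal B" F] by (force simp: frequently_def not_less)
next
  assume freq: "\<forall>B. \<exists>\<^sub>F x in F. ereal B < g x"
  show "Limsup F g = \<infinity>"
  proof (rule ccontr)
    assume "Limsup F g \<noteq> \<infinity>"
    then obtain B where "Limsup F g < ereal B"
      using ereal_dense2[of "Limsup F g" "\<infinity>"] by force
    then have "\<forall>\<^sub>F x in F. g x < ereal B" by (rule Limsup_lessD)
    with freq show False
      unfolding frequently_def by (metis (mono_tags, lifting) eventually_mono order.asym)
  qed
qed

lemma abs_value_diff_le_dist_graph:
  fixes f :: "real \<Rightarrow> real"
  shows "\<bar>f a - f b\<bar> \<le> dist (a, f a) (b, f b)"
  using dist_snd_le[of "(a, f a)" "(b, f b)"] by (simp add: dist_real_def)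

lemma abs_arg_diff_le_dist_graph:
  fixes f :: "real \<Rightarrow> real"
  shows "\<bar>a - b\<bar> \<le> dist (a, f a) (b, f b)"
  using dist_fst_le[of "(a, f a)" "(b, f b)"] by (simp add: dist_real_def)

lemma dist_graph_le_sum_abs_diffs:
  fixes f :: "real \<Rightarrow> real"
  shows "dist (a, f a) (b, f b) \<le> \<bar>a - b\<bar> + \<bar>f a - f b\<bar>"
proof -
  have "dist (a, f a) (b, f b) \<le> dist (a, f a) (b, f a) + dist (b, f a) (b, f b)"
    by (rule dist_triangle)
  then show ?thesis by (simp add: dist_Pair_Pair dist_real_def)
qed

definition M_violation :: "real set \<Rightarrow> (real \<Rightarrow> real) \<Rightarrow> real \<Rightarrow> real \<Rightarrow> real \<Rightarrow> real \<Rightarrow> real \<Rightarrow> bool" where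
  "M_violation I f y c \<epsilon> x z \<longleftrightarrow>
     x \<in> I \<inter> {y-\<epsilon><..<y} \<and> z \<in> I \<inter> {y<..<y+\<epsilon>} \<and>
     c * dist (x, f x) (z, f z) < dist (x, f x) (y, f y)"

lemma not_M_point_iff:
  "\<not> M_point I f y \<longleftrightarrow> (\<forall>c\<ge>1. \<forall>\<epsilon>>0. \<exists>x z. M_violation I f y c \<epsilon> x z)"
  unfolding M_point_def M_violation_def by (simp add: not_le Bex_def not_less[symmetric]) meson

lemma M_violation_mono:
  assumes "M_violation I f y c \<epsilon> x z" "c' \<le> c" "\<epsilon> \<le> \<epsilon>'"
  shows "M_violation I f y c' \<epsilon>' x z"
proof -
  have "c' * dist (x, f x) (z, f z) \<le> c * dist (x, f x) (z, f z)"
    using assms(2) by (simp add: mult_right_mono)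
  then have "c' * dist (x, f x) (z, f z) < dist (x, f x) (y, f y)"
    using assms(1) unfolding M_violation_def by linarith
  with assms show ?thesis
    unfolding M_violation_def by auto
qed

lemma M_violation_uminus [simp]:
  "M_violation I (\<lambda>t. - f t) y = M_violation I f y"
  by (intro ext) (simp add: M_violation_def dist_Pair_Pair dist_real_def abs_minus_commute)

lemma M_violation_bounds:
  assumes "M_violation I f y c \<epsilon> x z" "2 \<le> c"
  shows "(c - 1) * (y - x) < \<bar>f x - f y\<bar>"
    and "(c - 2) * (z - y) + \<bar>f z - f x\<bar> < \<bar>f x - f y\<bar>"
proof -
  define E where "E = dist (x, f x) (z, f z)"
  have xyz: "x < y" "y < z" and viol: "c * E < dist (x, f x) (y, f y)"
    using assms(1) unfolding M_violation_def E_def by auto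
  have D: "dist (x, f x) (y, f y) \<le> (y - x) + \<bar>f x - f y\<bar>"
    using dist_graph_le_sum_abs_diffs[where a=x and b=y and f=f] xyz by simp
  have E: "z - x \<le> E" "\<bar>f z - f x\<bar> \<le> E"
    using abs_arg_diff_le_dist_graph[where a=x and b=z and f=f]
      abs_value_diff_le_dist_graph[where a=x and b=z and f=f] xyz
    by (auto simp: E_def abs_minus_commute)
  then have "c * (y - x) \<le> c * E" "(c - 2) * (z - y) \<le> (c - 2) * E"
    using assms(2) xyz by (auto intro!: mult_left_mono)
  moreover have "(c - 1) * (y - x) = c * (y - x) - (y - x)" "(c - 2) * E = c * E - 2 * E"
    by (simp_all add: algebra_simps)
  ultimately show "(c - 1) * (y - x) < \<bar>f x - f y\<bar>"
    and "(c - 2) * (z - y) + \<bar>f z - f x\<bar> < \<bar>f x - f y\<bar>"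
    using viol D E xyz by linarith+
qed

lemma M_violation_quotients:
  assumes "M_violation I f y c \<epsilon> x z" "2 \<le> c" "f y < f x"
  shows "(f x - f y) / (x - y) < - (c - 1)" and "c - 2 < (f z - f y) / (z - y)"
proof -
  have xyz: "x < y" "y < z"
    using assms(1) unfolding M_violation_def by auto
  note bounds = M_violation_bounds[OF assms(1,2)]
  have "(c - 1) * (y - x) < f x - f y"
    using bounds(1) assms(3) by simp
  then have "c - 1 < (f x - f y) / (y - x)"
    using xyz by (simp add: less_divide_eq)
  moreover have "(f x - f y) / (x - y) = - ((f x - f y) / (y - x))"
    by (metis minus_diff_eq minus_divide_right)
  ultimately show "(f x - f y) / (x - y) < - (c - 1)"
    by linarith
  have "(c - 2) * (z - y) < f z - f y"
    using bounds(2) assms(3) by linarith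
  then show "c - 2 < (f z - f y) / (z - y)"
    using xyz by (simp add: less_divide_eq)
qed

lemma not_M_point_violations_of_one_sign:
  assumes "\<not> M_point I f y"
  shows "(\<forall>c\<ge>2. \<forall>\<epsilon>>0. \<exists>x z. M_violation I f y c \<epsilon> x z \<and> f y < f x) \<or>
         (\<forall>c\<ge>2. \<forall>\<epsilon>>0. \<exists>x z. M_violation I f y c \<epsilon> x z \<and> f x < f y)"
proof (rule disjCI)
  assume "\<not> (\<forall>c\<ge>2. \<forall>\<epsilon>>0. \<exists>x z. M_violation I f y c \<epsilon> x z \<and> f x < f y)"
  then obtain c0 \<epsilon>0 where c0: "c0 \<ge> 2" "\<epsilon>0 > 0"
    and no_neg: "\<And>x z. M_violation I f y c0 \<epsilon>0 x z \<Longrightarrow> \<not> f x < f y"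
    by blast
  show "\<forall>c\<ge>2. \<forall>\<epsilon>>0. \<exists>x z. M_violation I f y c \<epsilon> x z \<and> f y < f x"
  proof (intro allI impI)
    fix c \<epsilon> :: real assume "c \<ge> 2" "\<epsilon> > 0"
    then obtain x z where viol: "M_violation I f y (max c c0) (min \<epsilon> \<epsilon>0) x z"
      using assms c0 unfolding not_M_point_iff by (meson max.cobounded2 min_less_iff_conj order_trans one_le_numeral)
    have viol_c0: "M_violation I f y c0 \<epsilon>0 x z" and viol_c: "M_violation I f y c \<epsilon> x z"
      by (rule M_violation_mono[OF viol]; simp)+
    have "0 < (c0 - 1) * (y - x)"
      using viol c0(1) unfolding M_violation_def by simp
    then have "f x \<noteq> f y"
      using M_violation_bounds(1)[OF viol_c0 c0(1)] by auto
    with no_neg[OF viol_c0] viol_c show "\<exists>x z. M_violation I f y c \<epsilon> x z \<and> f y < f x"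
      by (meson linorder_neqE)
  qed
qed

lemma dini_upper_right_uminus:
  "dini_upper_right I (\<lambda>t. - f t) y = - dini_lower_right I f y"
proof -
  have "(- f t - - f y) / (t - y) = - ((f t - f y) / (t - y))" for t
    by (simp add: minus_divide_left)
  then show ?thesis
    unfolding dini_upper_right_def dini_lower_right_def
    by (simp only: uminus_ereal.simps(1)[symmetric] ereal_Limsup_uminus)
qed

lemma dini_lower_left_uminus:
  "dini_lower_left I (\<lambda>t. - f t) y = - dini_upper_left I f y"
proof -
  have "(- f t - - f y) / (t - y) = - ((f t - f y) / (t - y))" for t
    by (simp add: minus_divide_left)
  then show ?thesis
    unfolding dini_lower_left_def dini_upper_left_def
    by (simp only: uminus_ereal.simps(1)[symmetric] ereal_Liminf_uminus)
qed

lemma dini_infinite_if_positive_violations: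
  assumes viol: "\<forall>c\<ge>2. \<forall>\<epsilon>>0. \<exists>x z. M_violation I f y c \<epsilon> x z \<and> f y < f x"
  shows "dini_upper_right I f y = \<infinity>" and "dini_lower_left I f y = -\<infinity>"
proof -
  have witness: "\<exists>x z. M_violation I f y (\<bar>B\<bar> + 2) d x z \<and>
      (f x - f y) / (x - y) < B \<and> B < (f z - f y) / (z - y)" if "d > 0" for B d :: real
  proof -
    obtain x z where "M_violation I f y (\<bar>B\<bar> + 2) d x z" "f y < f x"
      using viol[rule_format, of "\<bar>B\<bar> + 2" d] \<open>d > 0\<close> by auto
    with M_violation_quotients[OF this(1) _ this(2)] show ?thesis
      by (intro exI[of _ x] exI[of _ z]) auto
  qed
  show "dini_upper_right I f y = \<infinity>"
    unfolding dini_upper_right_def Limsup_eq_PInfty_iff frequently_at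
  proof (intro allI impI)
    fix B d :: real assume "d > 0"
    with witness obtain x z where "M_violation I f y (\<bar>B\<bar> + 2) d x z" "B < (f z - f y) / (z - y)"
      by blast
    then show "\<exists>t\<in>I \<inter> {y<..}. t \<noteq> y \<and> dist t y < d \<and> ereal B < ereal ((f t - f y) / (t - y))"
      by (intro bexI[of _ z]) (auto simp: M_violation_def dist_real_def)
  qed
  show "dini_lower_left I f y = -\<infinity>"
    unfolding dini_lower_left_def Liminf_eq_MInfty_iff frequently_at
  proof (intro allI impI)
    fix B d :: real assume "d > 0"
    with witness obtain x z where "M_violation I f y (\<bar>B\<bar> + 2) d x z" "(f x - f y) / (x - y) < B"
      by blast
    then show "\<exists>t\<in>I \<inter> {..<y}. t \<noteq> y \<and> dist t y < d \<and> ereal ((f t - f y) / (t - y)) < ereal B"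
      by (intro bexI[of _ x]) (auto simp: M_violation_def dist_real_def)
  qed
qed

lemma not_M_point_dini_infinite:
  assumes "\<not> M_point I f y"
  shows "(dini_upper_right I f y = \<infinity> \<and> dini_lower_left I f y = -\<infinity>) \<or>
         (dini_upper_left I f y = \<infinity> \<and> dini_lower_right I f y = -\<infinity>)"
  using not_M_point_violations_of_one_sign[OF assms]
proof
  assume "\<forall>c\<ge>2. \<forall>\<epsilon>>0. \<exists>x z. M_violation I f y c \<epsilon> x z \<and> f y < f x"
  then show ?thesis
    using dini_infinite_if_positive_violations by blast
next
  assume "\<forall>c\<ge>2. \<forall>\<epsilon>>0. \<exists>x z. M_violation I f y c \<epsilon> x z \<and> f x < f y"
  then have "\<forall>c\<ge>2. \<forall>\<epsilon>>0. \<exists>x z. M_violation I (\<lambda>t. - f t) y c \<epsilon> x z \<and> - f y < - f x"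
    by simp
  from dini_infinite_if_positive_violations[OF this] show ?thesis
    unfolding dini_upper_right_uminus dini_lower_left_uminus by (simp add: ereal_uminus_eq_reorder)
qed

lemma measure_gt_half_imp_upper_half_point:
  assumes "A \<subseteq> {a<..<a + \<delta>}" "0 < \<delta>" "\<delta> / 2 < measure lebesgue A"
  shows "\<exists>s\<in>A. a + \<delta> / 2 \<le> s"
proof (rule ccontr)
  assume "\<not> ?thesis"
  then have sub: "A \<subseteq> {a..a + \<delta> / 2}"
    using assms(1) by force
  have "A \<in> sets lebesgue"
    using assms(2,3) measure_notin_sets[of A lebesgue] by force
  then have "measure lebesgue A \<le> measure lebesgue {a..a + \<delta> / 2}"
    using sub by (intro measure_mono_fmeasurable) auto
  with assms(2,3) show False by simp
qed

lemma ap_dini_lower_right_PInfty_D: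
  assumes "ap_dini_lower_right I f y = \<infinity>"
  obtains \<delta>0 where "\<delta>0 > 0"
    and "\<And>\<delta>. 0 < \<delta> \<Longrightarrow> \<delta> < \<delta>0 \<Longrightarrow>
           \<exists>s\<in>I. y + \<delta> / 2 \<le> s \<and> s < y + \<delta> \<and> T * (s - y) \<le> f s - f y"
proof -
  define G where "G t \<delta> = {s \<in> I \<inter> {y<..<y+\<delta>}. (f s - f y) / (s - y) \<ge> t}" for t \<delta>
  have "ereal T < ap_dini_lower_right I f y"
    using assms by simp
  then obtain t where "T < t" and density: "((\<lambda>\<delta>. measure lebesgue (G t \<delta>) / \<delta>) \<longlongrightarrow> 1) (at_right 0)"
    unfolding ap_dini_lower_right_def less_Sup_iff G_def by auto
  have "\<forall>\<^sub>F \<delta> in at_right 0. 1 / 2 < measure lebesgue (G t \<delta>) / \<delta>"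
    by (rule order_tendstoD(1)[OF density]) simp
  then obtain \<delta>0 where "\<delta>0 > 0"
    and half: "\<And>\<delta>. 0 < \<delta> \<Longrightarrow> \<delta> < \<delta>0 \<Longrightarrow> 1 / 2 < measure lebesgue (G t \<delta>) / \<delta>"
    unfolding eventually_at_right_field by auto
  show thesis
  proof (rule that[OF \<open>\<delta>0 > 0\<close>])
    fix \<delta> :: real assume "0 < \<delta>" "\<delta> < \<delta>0"
    then have "\<delta> / 2 < measure lebesgue (G t \<delta>)"
      using half[of \<delta>] by (simp add: less_divide_eq)
    then obtain s where s: "s \<in> G t \<delta>" "y + \<delta> / 2 \<le> s"
      using measure_gt_half_imp_upper_half_point[of "G t \<delta>" y \<delta>] \<open>0 < \<delta>\<close>
      unfolding G_def by blast
    then have "y < s" "t * (s - y) \<le> f s - f y"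
      unfolding G_def by (auto simp: pos_le_divide_eq)
    moreover have "T * (s - y) \<le> t * (s - y)"
      using \<open>T < t\<close> \<open>y < s\<close> by simp
    ultimately have "T * (s - y) \<le> f s - f y"
      by linarith
    with s show "\<exists>s\<in>I. y + \<delta> / 2 \<le> s \<and> s < y + \<delta> \<and> T * (s - y) \<le> f s - f y"
      unfolding G_def by auto
  qed
qed

lemma dini_lower_left_MInfty_steep_point:
  assumes "dini_lower_left I f y = -\<infinity>" "continuous_on I f" "y \<in> I" "\<epsilon> > 0" "\<eta> > 0"
  obtains x where "x \<in> I" "y - \<epsilon> < x" "x < y" "M * (y - x) < f x - f y" "f x - f y < \<eta>"
proof -
  let ?F = "at y within I \<inter> {..<y}"
  have "(f \<longlongrightarrow> f y) ?F"
    using assms(2,3) continuous_on_eq_continuous_within continuous_within tendsto_within_subset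
    by (metis inf_le1)
  then have "\<forall>\<^sub>F x in ?F. dist (f x) (f y) < \<eta>"
    using assms(5) by (rule tendstoD)
  with assms(1) have "\<exists>\<^sub>F x in ?F. (f x - f y) / (x - y) < - M \<and> dist (f x) (f y) < \<eta>"
    unfolding dini_lower_left_def Liminf_eq_MInfty_iff
    by (auto intro: frequently_eventually_frequently)
  then obtain x where x: "x \<in> I" "x < y" "dist x y < \<epsilon>"
    and quot: "(f x - f y) / (x - y) < - M" and "dist (f x) (f y) < \<eta>"
    using assms(4) unfolding frequently_at by blast
  moreover have "M * (y - x) < f x - f y"
    using quot x(2) by (simp add: divide_less_eq algebra_simps)
  ultimately show thesis
    by (intro that) (auto simp: dist_real_def)
qed

lemma ap_dini_lower_right_PInfty_level_points:
  assumes I: "is_interval I" and f: "continuous_on I f" and "y \<in> I"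
    and right: "ap_dini_lower_right I f y = \<infinity>" and "T > 0"
  obtains \<delta>0 where "\<delta>0 > 0"
    and "\<And>a. 0 < a \<Longrightarrow> 2 * a / T < \<delta>0 \<Longrightarrow> \<exists>z\<in>I. y < z \<and> z < y + 2 * a / T \<and> f z = f y + a"
proof -
  obtain \<delta>0 where "\<delta>0 > 0" and right_points: "\<And>\<delta>. 0 < \<delta> \<Longrightarrow> \<delta> < \<delta>0 \<Longrightarrow>
      \<exists>s\<in>I. y + \<delta> / 2 \<le> s \<and> s < y + \<delta> \<and> T * (s - y) \<le> f s - f y"
    using ap_dini_lower_right_PInfty_D[OF right] by blast
  show thesis
  proof (rule that[OF \<open>\<delta>0 > 0\<close>])
    fix a :: real assume "0 < a" "2 * a / T < \<delta>0"
    define \<delta> where "\<delta> = 2 * a / T"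
    have "0 < \<delta>" "T * \<delta> = 2 * a"
      using \<open>0 < a\<close> \<open>T > 0\<close> unfolding \<delta>_def by auto
    then obtain s where s: "s \<in> I" "y + \<delta> / 2 \<le> s" "s < y + \<delta>" "T * (s - y) \<le> f s - f y"
      using right_points \<open>2 * a / T < \<delta>0\<close> unfolding \<delta>_def by blast
    have "a \<le> T * (s - y)"
      using \<open>T * \<delta> = 2 * a\<close> s(2) \<open>T > 0\<close> mult_left_mono[of "\<delta> / 2" "s - y" T] by simp
    then have "f y \<le> f y + a" "f y + a \<le> f s" "y \<le> s"
      using \<open>0 < a\<close> \<open>0 < \<delta>\<close> s(2,4) by simp_all
    moreover have "{y..s} \<subseteq> I"
      using I \<open>y \<in> I\<close> s(1) unfolding is_interval_1 by (meson atLeastAtMost_iff subsetI)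
    ultimately obtain z where z: "y \<le> z" "z \<le> s" "f z = f y + a"
      using IVT'[of f y "f y + a" s] continuous_on_subset[OF f] by blast
    have "y \<noteq> z"
      using z(3) \<open>0 < a\<close> by auto
    with z \<open>{y..s} \<subseteq> I\<close> s(3) show "\<exists>z\<in>I. y < z \<and> z < y + 2 * a / T \<and> f z = f y + a"
      unfolding \<delta>_def by (intro bexI[of _ z]) auto
  qed
qed

lemma dist_graph_mult_lt_if_level_point:
  fixes f :: "real \<Rightarrow> real"
  assumes "x < y" "y < z" "f z = f x" "0 \<le> c"
    and "2 * c * (y - x) < f x - f y" "2 * c * (z - y) < f x - f y"
  shows "c * dist (x, f x) (z, f z) < dist (x, f x) (y, f y)"
proof -
  have "c * dist (x, f x) (z, f z) = c * (z - x)"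
    using assms(1-3) by (simp add: dist_Pair_Pair dist_real_def)
  also have "\<dots> < f x - f y"
    using assms(5,6) by (simp add: algebra_simps)
  also have "\<dots> \<le> dist (x, f x) (y, f y)"
    using abs_value_diff_le_dist_graph[where a=x and b=y and f=f] by simp
  finally show ?thesis .
qed

lemma dini_lower_left_MInfty_ap_dini_lower_right_PInfty_imp_not_M_point:
  assumes I: "is_interval I" and f: "continuous_on I f" and "y \<in> I"
    and left: "dini_lower_left I f y = -\<infinity>" and right: "ap_dini_lower_right I f y = \<infinity>"
  shows "\<not> M_point I f y"
proof
  assume "M_point I f y"
  then obtain c \<epsilon> where "c \<ge> 1" "\<epsilon> > 0" and M: "\<And>x z. x \<in> I \<inter> {y-\<epsilon><..<y} \<Longrightarrow>
      z \<in> I \<inter> {y<..<y+\<epsilon>} \<Longrightarrow> dist (x, f x) (y, f y) \<le> c * dist (x, f x) (z, f z)"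
    unfolding M_point_def by blast
  define T where "T = 4 * c + 1"
  have "T > 0"
    using \<open>c \<ge> 1\<close> by (simp add: T_def)
  then obtain \<delta>0 where "\<delta>0 > 0" and level: "\<And>a. 0 < a \<Longrightarrow> 2 * a / T < \<delta>0 \<Longrightarrow>
      \<exists>z\<in>I. y < z \<and> z < y + 2 * a / T \<and> f z = f y + a"
    using ap_dini_lower_right_PInfty_level_points[OF I f \<open>y \<in> I\<close> right] by blast
  have "T * min \<delta>0 \<epsilon> / 2 > 0"
    using \<open>T > 0\<close> \<open>\<delta>0 > 0\<close> \<open>\<epsilon> > 0\<close> by simp
  then obtain x where x: "x \<in> I" "y - \<epsilon> < x" "x < y"
    and steep: "(2 * c + 1) * (y - x) < f x - f y" and small: "f x - f y < T * min \<delta>0 \<epsilon> / 2"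
    using dini_lower_left_MInfty_steep_point[OF left f \<open>y \<in> I\<close> \<open>\<epsilon> > 0\<close>] by blast
  define a where "a = f x - f y"
  have "0 < (2 * c + 1) * (y - x)"
    using \<open>c \<ge> 1\<close> x(3) by simp
  then have "a > 0"
    using steep unfolding a_def by linarith
  have "2 * a < T * min \<delta>0 \<epsilon>"
    using small unfolding a_def by simp
  then have "2 * a / T < min \<delta>0 \<epsilon>"
    using \<open>T > 0\<close> by (metis mult.commute pos_divide_less_eq)
  then obtain z where z: "z \<in> I" "y < z" "z < y + 2 * a / T" "f z = f x"
    using level[OF \<open>a > 0\<close>] unfolding a_def by auto
  have "2 * c * (z - y) < a"
  proof -
    have "2 * c * (z - y) \<le> 2 * c * (2 * a / T)"
      using z(3) \<open>c \<ge> 1\<close> by (intro mult_left_mono) auto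
    also have "\<dots> < a"
      using \<open>a > 0\<close> \<open>T > 0\<close> by (simp add: T_def field_simps)
    finally show ?thesis .
  qed
  moreover have "2 * c * (y - x) < a"
    using steep x(3) unfolding a_def by (simp add: algebra_simps)
  ultimately have "c * dist (x, f x) (z, f z) < dist (x, f x) (y, f y)"
    using dist_graph_mult_lt_if_level_point[OF x(3) z(2,4)] \<open>c \<ge> 1\<close> unfolding a_def by simp
  moreover have "z < y + \<epsilon>"
    using z(3) \<open>2 * a / T < min \<delta>0 \<epsilon>\<close> by simp
  ultimately show False
    using M[of x z] x z(1,2) by fastforce
qed

theorem lemma3p1:
  fixes I :: "real set" and f :: "real \<Rightarrow> real" and y :: real
  assumes "is_interval I" and "\<exists>a\<in>I. \<exists>b\<in>I. a < b"
    and "continuous_on I f" and "y \<in> I"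
  shows "(\<not> M_point I f y \<longrightarrow>
            (dini_upper_right I f y = \<infinity> \<and> dini_lower_left I f y = -\<infinity>) \<or>
            (dini_upper_left I f y = \<infinity> \<and> dini_lower_right I f y = -\<infinity>))
       \<and> (dini_lower_left I f y = -\<infinity> \<and> ap_dini_lower_right I f y = \<infinity>
            \<longrightarrow> \<not> M_point I f y)"
  \<comment> \<open>Neither part needs the interval to be non-degenerate.\<close>
  using not_M_point_dini_infinite[of I f y]
    dini_lower_left_MInfty_ap_dini_lower_right_PInfty_imp_not_M_point[OF assms(1,3,4)]
  by blast

end
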